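(* Define $V:\mathbb{R}\to\mathbb{R}$ by $V(x) = c_0$ for $x<1$ and $V(x) = c_0 - \frac{(x-1)^2}{2}$ for $x\ge 1$, where $c_0\in\mathbb{R}$ is the constant making $\int e^{-V}\,d\gamma = 1$. Then $x\mapsto V(x) + x^2/2$ is convex (i.e. $V''\ge -1$), $\sup V<\infty$, and there is no $L>0$ and no $L$-Lipschitz map $T:\mathbb{R}\to\mathbb{R}$ with $T_\#\gamma = e^{-V}\,d\gamma$.
   Context: $\gamma$ is the standard Gaussian measure on $\mathbb{R}$. The push-forward is $(T_\#\nu)(A)=\nu(T^{-1}(A))$ for Borel $A$. *)

theory Defs
  imports "HOL-Probability.Probability"
begin

definition gauss :: "real measure" where
  "gauss = density lborel (\<lambda>x. ennreal (std_normal_density x))"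

definition Vpot :: "real \<Rightarrow> real \<Rightarrow> real" where
  "Vpot c0 x = (if x < 1 then c0 else c0 - (x - 1)^2 / 2)"

end

theory Submission
  imports Defs
begin

text \<open>
  Convexity holds because the derivative of \<open>V x + x\<^sup>2/2\<close> is \<open>min x 1\<close>, which is
  non-decreasing. The transport map is ruled out by exponential moments: if \<open>T\<close> is
  \<open>L\<close>-Lipschitz then \<open>T x \<le> \<bar>T 0\<bar> + L \<bar>x\<bar>\<close>, so \<open>\<integral> e\<^sup>T d\<gamma> < \<infinity>\<close>; but
  \<open>e\<^sup>y e\<^sup>-\<^sup>V\<^sup>(\<^sup>y\<^sup>) \<gamma>(y)\<close> is constant on \<open>[1, \<infinity>)\<close>, so \<open>\<integral> e\<^sup>y e\<^sup>-\<^sup>V d\<gamma> = \<infinity>\<close>.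
\<close>

lemma Vpot_borel_measurable [measurable]: "Vpot c0 \<in> borel_measurable borel"
  unfolding Vpot_def[abs_def] by measurable

lemma sets_gauss [simp, measurable_cong]: "sets gauss = sets borel"
  by (simp add: gauss_def)

lemma lipschitz_on_UNIV_borel_measurable:
  fixes T :: "'a::metric_space \<Rightarrow> 'b::metric_space"
  shows "L-lipschitz_on UNIV T \<Longrightarrow> T \<in> borel_measurable borel"
  by (intro borel_measurable_continuous_onI lipschitz_on_continuous_on)

lemma Vpot_le: "Vpot c0 x \<le> c0"
  by (simp add: Vpot_def)

lemma Vpot_plus_half_square_eq:
  "Vpot c0 x + x^2 / 2 = (if x \<in> {..<1} then c0 + x^2 / 2 else c0 + x - 1/2)"
  by (simp add: Vpot_def power2_eq_square field_simps)

lemma has_real_derivative_Vpot_plus_half_square: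
  "((\<lambda>x. Vpot c0 x + x^2 / 2) has_real_derivative min x 1) (at x)"
proof -
  have "((\<lambda>x. if x \<in> {..<1} then c0 + x^2 / 2 else c0 + x - 1/2)
          has_vector_derivative (if x \<in> {..<1} then x else 1)) (at x within UNIV)"
    by (rule has_vector_derivative_If_within_closures[where S = "{..<1}" and T = "{1..}"])
      (auto intro!: derivative_eq_intros simp: has_real_derivative_iff_has_vector_derivative[symmetric])
  moreover have "min x 1 = (if x \<in> {..<1} then x else 1)"
    by auto
  ultimately show ?thesis
    unfolding Vpot_plus_half_square_eq has_real_derivative_iff_has_vector_derivative by simp
qed

lemma convex_on_Vpot_plus_half_square: "convex_on UNIV (\<lambda>x. Vpot c0 x + x^2 / 2)"
  by (rule convex_on_realI[OF _ has_real_derivative_Vpot_plus_half_square]) (auto simp: min_def)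

lemma nn_integral_gauss:
  "f \<in> borel_measurable borel \<Longrightarrow>
    (\<integral>\<^sup>+ x. f x \<partial>gauss) = (\<integral>\<^sup>+ x. ennreal (std_normal_density x) * f x \<partial>lborel)"
  unfolding gauss_def by (simp add: nn_integral_density)

lemma std_normal_density_mult_exp_le:
  fixes x :: real
  shows "std_normal_density x * exp (a + L * \<bar>x\<bar>)
    \<le> sqrt 2 * exp (a + L^2) * normal_density 0 (sqrt 2) x"
proof -
  \<comment> \<open>\<open>L \<bar>x\<bar> \<le> L\<^sup>2 + x\<^sup>2/4\<close> trades the linear growth for half of the Gaussian decay\<close>
  have "- (x^2) / 2 + (a + L * \<bar>x\<bar>) \<le> (a + L^2) + - (x^2) / 4"
    using zero_le_power2[of "\<bar>x\<bar> / 2 - L"] by (simp add: power2_eq_square field_simps)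
  then have "exp (- (x^2) / 2) * exp (a + L * \<bar>x\<bar>) \<le> exp (a + L^2) * exp (- (x^2) / 4)"
    by (simp flip: exp_add)
  then have "std_normal_density x * exp (a + L * \<bar>x\<bar>)
      \<le> exp (a + L^2) * exp (- (x^2) / 4) / sqrt (2 * pi)"
    by (simp add: std_normal_density_def divide_right_mono)
  also have "\<dots> = sqrt 2 * exp (a + L^2) * normal_density 0 (sqrt 2) x"
    unfolding normal_density_def by (simp add: real_sqrt_mult field_simps)
  finally show ?thesis .
qed

lemma nn_integral_gauss_exp_lipschitz_finite:
  fixes T :: "real \<Rightarrow> real"
  assumes lip: "L-lipschitz_on UNIV T"
  shows "(\<integral>\<^sup>+ x. ennreal (exp (T x)) \<partial>gauss) < \<infinity>"
proof -
  define C where "C = sqrt 2 * exp (\<bar>T 0\<bar> + L^2)"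
  have bound: "std_normal_density x * exp (T x) \<le> C * normal_density 0 (sqrt 2) x" for x
  proof -
    have "T x \<le> \<bar>T 0\<bar> + L * \<bar>x\<bar>"
      using lipschitz_onD[OF lip, of x 0] by (simp add: dist_real_def)
    then have "std_normal_density x * exp (T x) \<le> std_normal_density x * exp (\<bar>T 0\<bar> + L * \<bar>x\<bar>)"
      by (intro mult_left_mono) simp_all
    also have "\<dots> \<le> C * normal_density 0 (sqrt 2) x"
      using std_normal_density_mult_exp_le by (simp add: C_def)
    finally show ?thesis .
  qed
  have "(\<integral>\<^sup>+ x. ennreal (exp (T x)) \<partial>gauss)
      = (\<integral>\<^sup>+ x. ennreal (std_normal_density x * exp (T x)) \<partial>lborel)"
    using lipschitz_on_UNIV_borel_measurable[OF lip] by (simp add: nn_integral_gauss ennreal_mult'')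
  also have "\<dots> \<le> (\<integral>\<^sup>+ x. ennreal (C * normal_density 0 (sqrt 2) x) \<partial>lborel)"
    by (intro nn_integral_mono ennreal_leI bound)
  also have "\<dots> < \<infinity>"
  proof -
    have "integrable lborel (\<lambda>x. C * normal_density 0 (sqrt 2) x)"
      by (intro integrable_mult_right integrable_normal_density) auto
    moreover have "C \<ge> 0"
      by (simp add: C_def)
    ultimately show ?thesis
      unfolding integrable_iff_bounded by simp
  qed
  finally show ?thesis .
qed

lemma emeasure_lborel_atLeast: "emeasure lborel {a::real..} = \<infinity>"
proof (rule ccontr)
  assume "emeasure lborel {a..} \<noteq> \<infinity>"
  then obtain r where r: "r \<ge> 0" "emeasure lborel {a..} = ennreal r"
    by (cases "emeasure lborel {a..}") auto
  have "emeasure lborel {a..a + r + 1} \<le> emeasure lborel {a..}"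
    by (rule emeasure_mono) auto
  with r show False
    by (simp add: ennreal_le_iff)
qed

lemma nn_integral_exp_density_Vpot_infinite:
  "(\<integral>\<^sup>+ y. ennreal (exp y) \<partial>density gauss (\<lambda>x. ennreal (exp (- Vpot c0 x)))) = \<infinity>"
proof -
  define c where "c = exp (1/2 - c0) / sqrt (2 * pi)"
  \<comment> \<open>on \<open>[1, \<infinity>)\<close> the exponents \<open>- y\<^sup>2/2 - V y + y\<close> sum to the constant \<open>1/2 - c0\<close>\<close>
  have tail: "ennreal c * indicator {1..} y
      \<le> ennreal (std_normal_density y * (exp (- Vpot c0 y) * exp y))" for y :: real
  proof (cases "y \<ge> 1")
    case True
    then have "- (y^2) / 2 + (- Vpot c0 y + y) = 1/2 - c0"
      by (simp add: Vpot_def power2_eq_square field_simps)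
    then have "std_normal_density y * (exp (- Vpot c0 y) * exp y) = c"
      by (simp add: c_def std_normal_density_def mult_exp_exp)
    with True show ?thesis
      by simp
  qed simp
  have "(\<integral>\<^sup>+ y. ennreal (exp y) \<partial>density gauss (\<lambda>x. ennreal (exp (- Vpot c0 x))))
      = (\<integral>\<^sup>+ y. ennreal (std_normal_density y * (exp (- Vpot c0 y) * exp y)) \<partial>lborel)"
    by (simp add: nn_integral_density nn_integral_gauss ennreal_mult'')
  also have "\<dots> \<ge> (\<integral>\<^sup>+ y. ennreal c * indicator {1::real..} y \<partial>lborel)"
    by (intro nn_integral_mono tail)
  moreover have "(\<integral>\<^sup>+ y. ennreal c * indicator {1::real..} y \<partial>lborel) = \<infinity>"
    by (simp add: c_def nn_integral_cmult_indicator emeasure_lborel_atLeast ennreal_mult_top)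
  ultimately show ?thesis
    by (simp add: top_unique)
qed

theorem mainTheorem8:
  fixes c0 :: real
  assumes norm: "(\<integral>\<^sup>+ x. ennreal (exp (- Vpot c0 x)) \<partial>gauss) = 1"
  shows "convex_on UNIV (\<lambda>x. Vpot c0 x + x^2 / 2)
    \<and> bdd_above (range (Vpot c0))
    \<and> \<not> (\<exists>L>0. \<exists>T :: real \<Rightarrow> real. L-lipschitz_on UNIV T \<and>
            distr gauss borel T = density gauss (\<lambda>x. ennreal (exp (- Vpot c0 x))))"
proof (intro conjI notI)
  show "convex_on UNIV (\<lambda>x. Vpot c0 x + x^2 / 2)"
    by (rule convex_on_Vpot_plus_half_square)
  show "bdd_above (range (Vpot c0))"
    using Vpot_le by (rule bdd_aboveI2)
  assume "\<exists>L>0. \<exists>T :: real \<Rightarrow> real. L-lipschitz_on UNIV T \<and>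
            distr gauss borel T = density gauss (\<lambda>x. ennreal (exp (- Vpot c0 x)))"
  then obtain L and T :: "real \<Rightarrow> real" where lip: "L-lipschitz_on UNIV T"
    and push: "distr gauss borel T = density gauss (\<lambda>x. ennreal (exp (- Vpot c0 x)))"
    by blast
  have "(\<integral>\<^sup>+ x. ennreal (exp (T x)) \<partial>gauss) = (\<integral>\<^sup>+ y. ennreal (exp y) \<partial>distr gauss borel T)"
    using lipschitz_on_UNIV_borel_measurable[OF lip] by (simp add: nn_integral_distr)
  also have "\<dots> = \<infinity>"
    unfolding push by (rule nn_integral_exp_density_Vpot_infinite)
  finally show False
    using nn_integral_gauss_exp_lipschitz_finite[OF lip] by simp
qed

end
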